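(* Let $B \in M_m\otimes M_n$ be (real) symmetric and define $X = (B + B^\Gamma)/2$. Then \[ \mu_{\min}(B) = \mu_{\min}(X) = \mu^{\mathbb{C}}_{\min}(X) \quad\text{and}\quad \mu_{\max}(B) = \mu_{\max}(X) = \mu^{\mathbb{C}}_{\max}(X). \]
   Context: $M_n$ denotes real $n\times n$ matrices and $M_m\otimes M_n$ is identified with $M_{mn}$ via the Kronecker product. For $A = \sum_j X_j \otimes Y_j \in M_m\otimes M_n$, the partial transpose is $A^\Gamma = \sum_j X_j \otimes Y_j^T$. For $B \in M_m\otimes M_n$, $\mu_{\min}(B) = \min\{(\mathbf{v}\otimes\mathbf{w})^T B(\mathbf{v}\otimes\mathbf{w}) : \mathbf{v}\in\mathbb{R}^m,\mathbf{w}\in\mathbb{R}^n, \|\mathbf{v}\|=\|\mathbf{w}\|=1\}$ and $\mu_{\max}(B)$ is the corresponding maximum; $\mu^{\mathbb{C}}_{\min}(B)$ and $\mu^{\mathbb{C}}_{\max}(B)$ are defined in the same way but with $\mathbf{v}\in\mathbb{C}^m$, $\mathbf{w}\in\mathbb{C}^n$ and $(\mathbf{v}\otimes\mathbf{w})^*B(\mathbf{v}\otimes\mathbf{w})$ in place of the real quadratic form. *)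

theory Defs
  imports "HOL-Analysis.Analysis"
begin

text \<open>M_m (x) M_n is modelled as real matrices indexed by the product type 'm \<times> 'n
  (row (i,k), column (j,l)); this is the Kronecker identification with M_{mn}.\<close>

definition kvec :: "'a::times ^ 'm::finite \<Rightarrow> 'a ^ 'n::finite \<Rightarrow> 'a ^ ('m \<times> 'n)" where
  "kvec v w = (\<chi> p. v $ fst p * w $ snd p)"

text \<open>Partial transpose: for A = sum X_j (x) Y_j, A^Gamma = sum X_j (x) Y_j^T; entrywise
  A^Gamma_{(i,k),(j,l)} = A_{(i,l),(j,k)}.\<close>
definition partial_transpose :: "'a ^ ('m::finite \<times> 'n::finite) ^ ('m \<times> 'n) \<Rightarrow> 'a ^ ('m \<times> 'n) ^ ('m \<times> 'n)" where
  "partial_transpose A = (\<chi> r c. A $ (fst r, snd c) $ (fst c, snd r))"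

definition prod_vals :: "real ^ ('m::finite \<times> 'n::finite) ^ ('m \<times> 'n) \<Rightarrow> real set" where
  "prod_vals B = {kvec v w \<bullet> (B *v kvec v w) | (v :: real ^ 'm) (w :: real ^ 'n).
                    norm v = 1 \<and> norm w = 1}"

definition mu_min :: "real ^ ('m::finite \<times> 'n::finite) ^ ('m \<times> 'n) \<Rightarrow> real" where
  "mu_min B = Inf (prod_vals B)"

definition mu_max :: "real ^ ('m::finite \<times> 'n::finite) ^ ('m \<times> 'n) \<Rightarrow> real" where
  "mu_max B = Sup (prod_vals B)"

text \<open>Complex version: (v (x) w)^* B (v (x) w) for complex unit v, w. For real symmetric B
  this quantity is real; we take its real part.\<close>
definition cquad :: "real ^ ('m::finite \<times> 'n::finite) ^ ('m \<times> 'n) \<Rightarrow> complex ^ ('m \<times> 'n) \<Rightarrow> complex" where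
  "cquad B u = (\<Sum>a\<in>UNIV. \<Sum>b\<in>UNIV. cnj (u $ a) * complex_of_real (B $ a $ b) * u $ b)"

definition prod_vals_C :: "real ^ ('m::finite \<times> 'n::finite) ^ ('m \<times> 'n) \<Rightarrow> real set" where
  "prod_vals_C B = {Re (cquad B (kvec v w)) | (v :: complex ^ 'm) (w :: complex ^ 'n).
                    norm v = 1 \<and> norm w = 1}"

definition mu_min_C :: "real ^ ('m::finite \<times> 'n::finite) ^ ('m \<times> 'n) \<Rightarrow> real" where
  "mu_min_C B = Inf (prod_vals_C B)"

definition mu_max_C :: "real ^ ('m::finite \<times> 'n::finite) ^ ('m \<times> 'n) \<Rightarrow> real" where
  "mu_max_C B = Sup (prod_vals_C B)"

end

theory Submission
  imports Defs
begin

text \<open>On product vectors the quadratic forms of B and of its partial transpose agree, since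
  swapping the second tensor indices of a pair of entries of v \<otimes> w leaves the product of those
  entries unchanged; hence B and X have the same real product values. For complex unit vectors
  v = p + iq and w = r + is, the value of X at v \<otimes> w splits into the values at p \<otimes> r, p \<otimes> s,
  q \<otimes> r, q \<otimes> s plus a cross term that is odd under the partial swap and so vanishes because X
  is invariant under partial transposition. By homogeneity the complex value is then a convex
  combination of real product values, with weights |p|^2|r|^2, |p|^2|s|^2, |q|^2|r|^2, |q|^2|s|^2.\<close>

definition quad_form :: "real ^ 'k::finite ^ 'k \<Rightarrow> real ^ 'k \<Rightarrow> real" where
  "quad_form M u = (\<Sum>a\<in>UNIV. \<Sum>b\<in>UNIV. M $ a $ b * u $ a * u $ b)"

lemma inner_mult_vec_eq_quad_form: "u \<bullet> (M *v u) = quad_form M u"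
  unfolding inner_vec_def matrix_vector_mult_def quad_form_def
  by (simp add: sum_distrib_left mult_ac)

lemma prod_vals_eq_quad_form:
  "prod_vals M = {quad_form M (kvec v w) | v w. norm v = 1 \<and> norm w = 1}"
  unfolding prod_vals_def inner_mult_vec_eq_quad_form ..

lemma quad_form_add: "quad_form (A + B) u = quad_form A u + quad_form B u"
  unfolding quad_form_def by (simp add: sum.distrib algebra_simps)

lemma quad_form_scaleR: "quad_form (c *\<^sub>R M) u = c * quad_form M u"
  unfolding quad_form_def by (simp add: sum_distrib_left mult_ac)

lemma quad_form_scaleR_right: "quad_form M (c *\<^sub>R u) = c\<^sup>2 * quad_form M u"
  unfolding quad_form_def by (simp add: sum_distrib_left power2_eq_square mult_ac)

lemma kvec_scaleR: "kvec (s *\<^sub>R v) (t *\<^sub>R w) = (s * t) *\<^sub>R kvec (v :: real ^ 'm::finite) (w :: real ^ 'n::finite)"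
  by (simp add: vec_eq_iff kvec_def)

lemma continuous_on_kvec [continuous_intros]:
  assumes "continuous_on S f" "continuous_on S g"
  shows "continuous_on S (\<lambda>x. kvec (f x) (g x :: real ^ 'n::finite) :: real ^ ('m::finite \<times> 'n))"
  unfolding kvec_def by (intro continuous_intros continuous_on_vec_lambda assms)

lemma compact_prod_vals: "compact (prod_vals M)"
proof -
  have "prod_vals M = (\<lambda>(v, w). quad_form M (kvec v w)) ` (sphere 0 1 \<times> sphere 0 1)"
    unfolding prod_vals_eq_quad_form by fastforce
  moreover have "continuous_on (sphere 0 1 \<times> sphere 0 1) (\<lambda>(v, w). quad_form M (kvec v w))"
    unfolding case_prod_unfold quad_form_def by (intro continuous_intros continuous_on_component)
  ultimately show ?thesis by (metis compact_continuous_image compact_Times compact_sphere)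
qed

lemma prod_vals_nonempty: "prod_vals M \<noteq> {}"
  unfolding prod_vals_def by (auto intro!: exI[of _ "axis undefined 1"])

lemma sum_partial_swap:
  fixes F :: "('m::finite \<times> 'n::finite) \<Rightarrow> ('m \<times> 'n) \<Rightarrow> 'a::comm_monoid_add"
  shows "(\<Sum>a\<in>UNIV. \<Sum>b\<in>UNIV. F a b) = (\<Sum>a\<in>UNIV. \<Sum>b\<in>UNIV. F (fst a, snd b) (fst b, snd a))"
proof -
  define s :: "('m \<times> 'n) \<times> ('m \<times> 'n) \<Rightarrow> ('m \<times> 'n) \<times> ('m \<times> 'n)"
    where "s p = ((fst (fst p), snd (snd p)), (fst (snd p), snd (fst p)))" for p
  have "(\<Sum>a\<in>UNIV. \<Sum>b\<in>UNIV. F a b) = (\<Sum>p\<in>UNIV \<times> UNIV. F (fst p) (snd p))"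
    by (simp add: sum.cartesian_product split_def)
  also have "\<dots> = (\<Sum>p\<in>UNIV \<times> UNIV. F (fst (s p)) (snd (s p)))"
    by (rule sum.reindex_bij_witness[where i = s and j = s]) (auto simp: s_def)
  also have "\<dots> = (\<Sum>a\<in>UNIV. \<Sum>b\<in>UNIV. F (fst a, snd b) (fst b, snd a))"
    by (simp add: sum.cartesian_product split_def s_def)
  finally show ?thesis .
qed

lemma quad_form_partial_transpose_kvec:
  "quad_form (partial_transpose B) (kvec v w) = quad_form B (kvec v w)"
proof -
  have "quad_form B (kvec v w) = (\<Sum>a\<in>UNIV. \<Sum>b\<in>UNIV.
      B $ (fst a, snd b) $ (fst b, snd a) * kvec v w $ (fst a, snd b) * kvec v w $ (fst b, snd a))"
    unfolding quad_form_def by (rule sum_partial_swap)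
  also have "\<dots> = quad_form (partial_transpose B) (kvec v w)"
    unfolding quad_form_def partial_transpose_def kvec_def by (simp add: mult_ac)
  finally show ?thesis by simp
qed

lemma prod_vals_partial_transpose_mean:
  "prod_vals ((1/2) *\<^sub>R (B + partial_transpose B)) = prod_vals B"
  unfolding prod_vals_eq_quad_form quad_form_scaleR quad_form_add quad_form_partial_transpose_kvec
  by simp

lemma partial_transpose_mean:
  "partial_transpose ((1/2) *\<^sub>R (B + partial_transpose B)) = (1/2) *\<^sub>R (B + partial_transpose B)"
  by (simp add: partial_transpose_def vec_eq_iff)

definition vec_Re :: "complex ^ 'k::finite \<Rightarrow> real ^ 'k" where
  "vec_Re v = (\<chi> i. Re (v $ i))"

definition vec_Im :: "complex ^ 'k::finite \<Rightarrow> real ^ 'k" where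
  "vec_Im v = (\<chi> i. Im (v $ i))"

definition vec_of_real :: "real ^ 'k::finite \<Rightarrow> complex ^ 'k" where
  "vec_of_real v = (\<chi> i. complex_of_real (v $ i))"

lemma norm_vec_Re_Im: "(norm v)\<^sup>2 = (norm (vec_Re v))\<^sup>2 + (norm (vec_Im v))\<^sup>2"
  unfolding dot_square_norm[symmetric] inner_vec_def vec_Re_def vec_Im_def
  by (simp add: inner_complex_def sum.distrib power2_eq_square)

lemma vec_Re_of_real [simp]: "vec_Re (vec_of_real v) = v"
  by (simp add: vec_Re_def vec_of_real_def vec_eq_iff)

lemma vec_Im_of_real [simp]: "vec_Im (vec_of_real v) = 0"
  by (simp add: vec_Im_def vec_of_real_def vec_eq_iff)

lemma norm_vec_of_real [simp]: "norm (vec_of_real v) = norm v"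
  using norm_vec_Re_Im[of "vec_of_real v"] by simp

lemma Re_cquad_kvec:
  fixes X :: "real ^ ('m::finite \<times> 'n::finite) ^ ('m \<times> 'n)"
  assumes "partial_transpose X = X"
  shows "Re (cquad X (kvec v w)) =
      quad_form X (kvec (vec_Re v) (vec_Re w)) + quad_form X (kvec (vec_Re v) (vec_Im w)) +
      quad_form X (kvec (vec_Im v) (vec_Re w)) + quad_form X (kvec (vec_Im v) (vec_Im w))"
proof -
  define p where "p = vec_Re v"
  define q where "q = vec_Im v"
  define r where "r = vec_Re w"
  define s where "s = vec_Im w"
  define cross where "cross a b = (p $ fst a * q $ fst b - q $ fst a * p $ fst b) *
      (s $ snd a * r $ snd b - r $ snd a * s $ snd b)" for a b :: "'m \<times> 'n"
  have X_swap: "X $ (fst a, snd b) $ (fst b, snd a) = X $ a $ b" for a b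
    using arg_cong[OF assms, of "\<lambda>M. M $ a $ b"] by (simp add: partial_transpose_def)
  have "(\<Sum>a\<in>UNIV. \<Sum>b\<in>UNIV. X $ a $ b * cross a b) =
      (\<Sum>a\<in>UNIV. \<Sum>b\<in>UNIV. X $ (fst a, snd b) $ (fst b, snd a) * cross (fst a, snd b) (fst b, snd a))"
    by (rule sum_partial_swap)
  also have "\<dots> = (\<Sum>a\<in>UNIV. \<Sum>b\<in>UNIV. - (X $ a $ b * cross a b))"
    unfolding X_swap by (intro sum.cong refl) (simp add: cross_def algebra_simps)
  also have "\<dots> = - (\<Sum>a\<in>UNIV. \<Sum>b\<in>UNIV. X $ a $ b * cross a b)"
    by (simp add: sum_negf)
  finally have cross_vanishes: "(\<Sum>a\<in>UNIV. \<Sum>b\<in>UNIV. X $ a $ b * cross a b) = 0"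
    by simp
  have entry: "Re (cnj (kvec v w $ a) * complex_of_real (X $ a $ b) * kvec v w $ b) =
      X $ a $ b * kvec p r $ a * kvec p r $ b + X $ a $ b * kvec p s $ a * kvec p s $ b +
      X $ a $ b * kvec q r $ a * kvec q r $ b + X $ a $ b * kvec q s $ a * kvec q s $ b +
      X $ a $ b * cross a b" for a b
    unfolding kvec_def p_def q_def r_def s_def vec_Re_def vec_Im_def cross_def
    by (simp add: algebra_simps)
  show ?thesis
    unfolding cquad_def Re_sum entry quad_form_def sum.distrib cross_vanishes
    by (simp add: p_def q_def r_def s_def)
qed

lemma quad_form_kvec_homogeneous:
  fixes v :: "real ^ 'm::finite" and w :: "real ^ 'n::finite"
  shows "\<exists>t\<in>prod_vals M. quad_form M (kvec v w) = ((norm v)\<^sup>2 * (norm w)\<^sup>2) * t"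
proof (cases "v = 0 \<or> w = 0")
  case True
  then have "quad_form M (kvec v w) = 0"
    by (auto simp: quad_form_def kvec_def)
  with True show ?thesis
    using prod_vals_nonempty by fastforce
next
  case False
  let ?t = "quad_form M (kvec ((1 / norm v) *\<^sub>R v) ((1 / norm w) *\<^sub>R w))"
  have "kvec v w = (norm v * norm w) *\<^sub>R kvec ((1 / norm v) *\<^sub>R v) ((1 / norm w) *\<^sub>R w)"
    using False by (simp add: kvec_scaleR)
  then have "quad_form M (kvec v w) = ((norm v)\<^sup>2 * (norm w)\<^sup>2) * ?t"
    by (simp add: quad_form_scaleR_right power_mult_distrib)
  moreover have "?t \<in> prod_vals M"
    unfolding prod_vals_eq_quad_form using False by fastforce
  ultimately show ?thesis by blast
qed

lemma prod_vals_subset_prod_vals_C: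
  assumes "partial_transpose X = X"
  shows "prod_vals X \<subseteq> prod_vals_C X"
proof
  fix x assume "x \<in> prod_vals X"
  then obtain v w where x: "x = quad_form X (kvec v w)" and "norm v = 1" "norm w = 1"
    unfolding prod_vals_eq_quad_form by blast
  moreover have "Re (cquad X (kvec (vec_of_real v) (vec_of_real w))) = x"
    unfolding Re_cquad_kvec[OF assms] x by (simp add: quad_form_def kvec_def)
  ultimately show "x \<in> prod_vals_C X"
    unfolding prod_vals_C_def by (auto intro!: exI[of _ "vec_of_real v"] exI[of _ "vec_of_real w"])
qed

lemma prod_vals_C_between:
  assumes "partial_transpose X = X" and "c \<in> prod_vals_C X"
  shows "Inf (prod_vals X) \<le> c \<and> c \<le> Sup (prod_vals X)"
proof -
  let ?R = "prod_vals X"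
  obtain v w where c: "c = Re (cquad X (kvec v w))" and "norm v = 1" "norm w = 1"
    using assms(2) unfolding prod_vals_C_def by blast
  have "bounded ?R" by (rule compact_imp_bounded[OF compact_prod_vals])
  then have bdd: "bdd_below ?R" "bdd_above ?R"
    by (simp_all add: bounded_imp_bdd_below bounded_imp_bdd_above)
  define a where "a = (norm (vec_Re v))\<^sup>2"
  define b where "b = (norm (vec_Im v))\<^sup>2"
  define d where "d = (norm (vec_Re w))\<^sup>2"
  define e where "e = (norm (vec_Im w))\<^sup>2"
  obtain t1 t2 t3 t4 where t: "t1 \<in> ?R" "t2 \<in> ?R" "t3 \<in> ?R" "t4 \<in> ?R"
    and c_eq: "c = (a * d) * t1 + (a * e) * t2 + (b * d) * t3 + (b * e) * t4"
    using quad_form_kvec_homogeneous[of X "vec_Re v" "vec_Re w"]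
      quad_form_kvec_homogeneous[of X "vec_Re v" "vec_Im w"]
      quad_form_kvec_homogeneous[of X "vec_Im v" "vec_Re w"]
      quad_form_kvec_homogeneous[of X "vec_Im v" "vec_Im w"]
    unfolding c Re_cquad_kvec[OF assms(1)] a_def b_def d_def e_def by metis
  have "a + b = 1" "d + e = 1"
    using norm_vec_Re_Im[of v] norm_vec_Re_Im[of w] \<open>norm v = 1\<close> \<open>norm w = 1\<close>
    by (simp_all add: a_def b_def d_def e_def)
  then have weights: "a * d + a * e + b * d + b * e = 1"
    by (metis distrib_left distrib_right mult_1 add.assoc)
  have scaled: "x * Inf ?R \<le> x * t \<and> x * t \<le> x * Sup ?R" if "x \<ge> 0" "t \<in> ?R" for x t
    using that bdd by (simp add: cInf_lower cSup_upper mult_left_mono)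
  have nonneg: "a * d \<ge> 0" "a * e \<ge> 0" "b * d \<ge> 0" "b * e \<ge> 0"
    by (simp_all add: a_def b_def d_def e_def)
  have "Inf ?R = (a * d) * Inf ?R + (a * e) * Inf ?R + (b * d) * Inf ?R + (b * e) * Inf ?R"
    "Sup ?R = (a * d) * Sup ?R + (a * e) * Sup ?R + (b * d) * Sup ?R + (b * e) * Sup ?R"
    using weights by (metis distrib_right mult_1_left)+
  then show ?thesis
    unfolding c_eq using scaled[OF nonneg(1) t(1)] scaled[OF nonneg(2) t(2)]
      scaled[OF nonneg(3) t(3)] scaled[OF nonneg(4) t(4)] by linarith
qed

lemma cInf_cSup_eq_if_between:
  fixes R C :: "'a::conditionally_complete_linorder set"
  assumes "R \<noteq> {}" "bdd_below R" "bdd_above R" "R \<subseteq> C"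
    and "\<And>c. c \<in> C \<Longrightarrow> Inf R \<le> c \<and> c \<le> Sup R"
  shows "Inf C = Inf R" and "Sup C = Sup R"
proof -
  have "C \<noteq> {}" "bdd_below C" "bdd_above C"
    using assms unfolding bdd_below_def bdd_above_def by blast+
  show "Inf C = Inf R"
  proof (rule antisym)
    show "Inf C \<le> Inf R"
      using assms \<open>bdd_below C\<close> by (intro cInf_superset_mono) auto
    show "Inf R \<le> Inf C"
      using assms \<open>C \<noteq> {}\<close> by (intro cInf_greatest) auto
  qed
  show "Sup C = Sup R"
  proof (rule antisym)
    show "Sup C \<le> Sup R"
      using assms \<open>C \<noteq> {}\<close> by (intro cSup_least) auto
    show "Sup R \<le> Sup C"
      using assms \<open>bdd_above C\<close> by (intro cSup_subset_mono) auto
  qed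
qed

theorem lemma5p1:
  fixes B :: "real ^ ('m::finite \<times> 'n::finite) ^ ('m \<times> 'n)"
  assumes "transpose B = B"
  defines "X \<equiv> (1/2) *\<^sub>R (B + partial_transpose B)"
  shows "mu_min B = mu_min X \<and> mu_min X = mu_min_C X \<and>
         mu_max B = mu_max X \<and> mu_max X = mu_max_C X"
proof -
  have invariant: "partial_transpose X = X"
    unfolding X_def by (rule partial_transpose_mean)
  have "bounded (prod_vals X)"
    by (rule compact_imp_bounded[OF compact_prod_vals])
  then have "Inf (prod_vals_C X) = Inf (prod_vals X)" "Sup (prod_vals_C X) = Sup (prod_vals X)"
    using cInf_cSup_eq_if_between[OF prod_vals_nonempty _ _
        prod_vals_subset_prod_vals_C[OF invariant] prod_vals_C_between[OF invariant]]
    by (simp_all add: bounded_imp_bdd_below bounded_imp_bdd_above)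
  moreover have "prod_vals X = prod_vals B"
    unfolding X_def by (rule prod_vals_partial_transpose_mean)
  ultimately show ?thesis
    unfolding mu_min_def mu_max_def mu_min_C_def mu_max_C_def by simp
qed

end
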